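(* Let $R$ be a finite chain ring with maximal ideal $\mathfrak{m}$, residue field $\mathbb{F}_q$, and natural projection $\pi:R\to\mathbb{F}_q$. Let $\lambda$ be a unit of $R$ with $\pi(\lambda)\neq\pi(\lambda)^{-1}$, and let $C$ be a free $\lambda$-constacyclic code of length $n$ over $R$ with $\Psi(C)=\langle F\rangle$, where $F$ divides $x^n-\lambda$. Then $C$ is an LCD code over $R$.
   Context: A finite chain ring is a finite commutative local ring whose ideals form a chain. A linear code $C\subseteq R^n$ is $\lambda$-constacyclic if $(\lambda c_{n-1},c_0,\dots,c_{n-2})\in C$ whenever $(c_0,\dots,c_{n-1})\in C$; free means free as an $R$-module. $\Psi:R^n\to R[x]/\langle x^n-\lambda\rangle$ is $(c_0,\dots,c_{n-1})\mapsto\sum c_ix^i$. $C$ is LCD if $C\cap C^\perp=\{\mathbf{0}\}$, where $C^\perp$ is the dual under the standard inner product $\sum_j u_jc_j$. *)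

theory Defs
  imports "HOL-Computational_Algebra.Polynomial"
begin

definition is_ideal :: "'a::comm_ring_1 set \<Rightarrow> bool" where
  "is_ideal I \<longleftrightarrow> 0 \<in> I \<and> (\<forall>x\<in>I. \<forall>y\<in>I. x + y \<in> I) \<and> (\<forall>r. \<forall>x\<in>I. r * x \<in> I)"

definition max_ideal :: "'a::comm_ring_1 set" where
  "max_ideal = {x. \<not> x dvd 1}"

definition finite_chain_ring :: "'a::comm_ring_1 itself \<Rightarrow> bool" where
  "finite_chain_ring _ \<longleftrightarrow> finite (UNIV :: 'a set) \<and> (0::'a) \<noteq> 1
     \<and> is_ideal (max_ideal :: 'a set)
     \<and> (\<forall>I J :: 'a set. is_ideal I \<longrightarrow> is_ideal J \<longrightarrow> I \<subseteq> J \<or> J \<subseteq> I)"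

(* Natural projection onto the residue field: pi a = pi b iff a - b in m.
   pi(lam) ~= pi(lam)^-1 means pi(lam) ~= pi(mu) where mu is the inverse of lam. *)
definition residue_ne_inverse :: "'a::comm_ring_1 \<Rightarrow> bool" where
  "residue_ne_inverse lam \<longleftrightarrow> (\<forall>mu. lam * mu = 1 \<longrightarrow> lam - mu \<notin> max_ideal)"

definition is_linear_code :: "nat \<Rightarrow> 'a::comm_ring_1 list set \<Rightarrow> bool" where
  "is_linear_code n C \<longleftrightarrow> (\<forall>c\<in>C. length c = n) \<and> replicate n 0 \<in> C
     \<and> (\<forall>u\<in>C. \<forall>v\<in>C. map2 (+) u v \<in> C) \<and> (\<forall>r. \<forall>u\<in>C. map ((*) r) u \<in> C)"

definition constacyclic :: "'a::comm_ring_1 \<Rightarrow> nat \<Rightarrow> 'a list set \<Rightarrow> bool" where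
  "constacyclic lam n C \<longleftrightarrow> is_linear_code n C \<and>
     (\<forall>c\<in>C. 0 < n \<longrightarrow> (lam * c ! (n - 1)) # take (n - 1) c \<in> C)"

definition lincomb :: "nat \<Rightarrow> (nat \<Rightarrow> 'a::comm_ring_1) \<Rightarrow> 'a list list \<Rightarrow> 'a list" where
  "lincomb n a B = map (\<lambda>j. \<Sum>i<length B. a i * (B ! i) ! j) [0..<n]"

definition free_code :: "nat \<Rightarrow> 'a::comm_ring_1 list set \<Rightarrow> bool" where
  "free_code n C \<longleftrightarrow> (\<exists>B. set B \<subseteq> C
     \<and> (\<forall>a. lincomb n a B = replicate n 0 \<longrightarrow> (\<forall>i<length B. a i = 0))
     \<and> (\<forall>c\<in>C. \<exists>a. c = lincomb n a B))"

(* Psi : R^n -> R[x]/<x^n - lam>; we represent classes by polynomials *)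
definition Psi :: "'a::comm_ring_1 list \<Rightarrow> 'a poly" where
  "Psi c = Poly c"

definition Psi_generated_by :: "'a::comm_ring_1 \<Rightarrow> nat \<Rightarrow> 'a list set \<Rightarrow> 'a poly \<Rightarrow> bool" where
  "Psi_generated_by lam n C F \<longleftrightarrow>
     C = {c. length c = n \<and> (\<exists>g h. Psi c = g * F + h * (monom 1 n - [:lam:]))}"

definition inner :: "nat \<Rightarrow> 'a::comm_ring_1 list \<Rightarrow> 'a list \<Rightarrow> 'a" where
  "inner n u c = (\<Sum>j<n. u ! j * c ! j)"

definition dual_code :: "nat \<Rightarrow> 'a::comm_ring_1 list set \<Rightarrow> 'a list set" where
  "dual_code n C = {u. length u = n \<and> (\<forall>c\<in>C. inner n u c = 0)}"

definition is_LCD :: "nat \<Rightarrow> 'a::comm_ring_1 list set \<Rightarrow> bool" where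
  "is_LCD n C \<longleftrightarrow> C \<inter> dual_code n C = {replicate n 0}"

end

theory Submission
  imports Defs
begin

(* Suppose 0 <> c lies in C and in its dual. The maximal ideal m = (gamma) is principal and
   gamma is nilpotent, so some multiple c' of c is nonzero and killed by gamma. Expanding c' in
   a basis of the free code C gives c' = s w with w in C having a unit coordinate; as s <> 0,
   w is orthogonal to C modulo m. Reducing modulo m, the image W of w is a nonzero multiple of
   f = pi(F) of degree < n, orthogonal to the constacyclic code <f> over the residue field.
   There, with l = pi(lambda) and f h = x^n - l, orthogonality makes both h and the reciprocal
   f* of f divide the reciprocal of W. As reflect(x^n - l) + l (x^n - l) = 1 - l^2 is a unit
   exactly when l <> l^-1, the product h f* of degree n divides the reciprocal of W, which has
   degree < n; so W = 0, a contradiction. *)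

section \<open>Local rings and their residue field\<close>

definition local_ring :: "'a::comm_ring_1 itself \<Rightarrow> bool" where
  "local_ring _ \<longleftrightarrow> is_ideal (max_ideal :: 'a set)"

lemma finite_chain_ring_imp_local_ring:
  "finite_chain_ring TYPE('a::comm_ring_1) \<Longrightarrow> local_ring TYPE('a)"
  by (simp add: finite_chain_ring_def local_ring_def)

context
  assumes local: "local_ring TYPE('a::comm_ring_1)"
begin

lemma zero_in_max_ideal: "(0::'a) \<in> max_ideal"
  using local by (simp add: local_ring_def is_ideal_def)

lemma max_ideal_add: "(x::'a) \<in> max_ideal \<Longrightarrow> y \<in> max_ideal \<Longrightarrow> x + y \<in> max_ideal"
  using local by (simp add: local_ring_def is_ideal_def)

lemma max_ideal_mult: "(x::'a) \<in> max_ideal \<Longrightarrow> r * x \<in> max_ideal"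
  using local by (simp add: local_ring_def is_ideal_def)

lemma max_ideal_diff: "(x::'a) \<in> max_ideal \<Longrightarrow> y \<in> max_ideal \<Longrightarrow> x - y \<in> max_ideal"
  using max_ideal_add[of x "- 1 * y"] max_ideal_mult[of y "- 1"] by simp

end

definition residue_class :: "'a::comm_ring_1 \<Rightarrow> 'a set" where
  "residue_class x = {y. y - x \<in> max_ideal}"

text \<open>Outside local rings the carrier is a copy of GF(2), so that the type is a field in every
  case.\<close>

definition residue_classes :: "'a::comm_ring_1 set set" where
  "residue_classes = (if local_ring TYPE('a) then range residue_class else {{}, UNIV})"

typedef (overloaded) ('a::comm_ring_1) residue_field = "residue_classes :: 'a set set"
  by (auto simp: residue_classes_def)

definition residue :: "'a::comm_ring_1 \<Rightarrow> 'a residue_field" where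
  "residue x = Abs_residue_field (residue_class x)"

definition residue_repr :: "'a::comm_ring_1 residue_field \<Rightarrow> 'a" where
  "residue_repr X = (SOME x. Rep_residue_field X = residue_class x)"

context
  assumes local: "local_ring TYPE('a::comm_ring_1)"
begin

lemma residue_class_eq_iff: "residue_class (x::'a) = residue_class y \<longleftrightarrow> x - y \<in> max_ideal"
proof
  assume "residue_class x = residue_class y"
  moreover have "x \<in> residue_class x"
    using zero_in_max_ideal[OF local] by (simp add: residue_class_def)
  ultimately show "x - y \<in> max_ideal" by (simp add: residue_class_def)
next
  assume xy: "x - y \<in> max_ideal"
  have "z - x \<in> max_ideal \<longleftrightarrow> z - y \<in> max_ideal" for z
    using max_ideal_add[OF local _ xy, of "z - x"] max_ideal_diff[OF local _ xy, of "z - y"]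
    by auto
  then show "residue_class x = residue_class y" by (auto simp: residue_class_def)
qed

lemma residue_eq_iff: "residue (x::'a) = residue y \<longleftrightarrow> x - y \<in> max_ideal"
  using local unfolding residue_def
  by (subst Abs_residue_field_inject) (auto simp: residue_classes_def residue_class_eq_iff)

lemma residue_residue_repr: "residue (residue_repr X) = (X::'a residue_field)"
proof -
  have "\<exists>x. Rep_residue_field X = residue_class x"
    using Rep_residue_field[of X] local by (auto simp: residue_classes_def)
  then have "Rep_residue_field X = residue_class (residue_repr X)"
    unfolding residue_repr_def by (rule someI_ex)
  then show ?thesis by (metis Rep_residue_field_inverse residue_def)
qed

lemma residue_cases:
  obtains x :: 'a where "X = residue x"
  using residue_residue_repr by metis

lemma residue_repr_residue: "residue_repr (residue x) - (x::'a) \<in> max_ideal"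
  using residue_residue_repr[of "residue x"] by (simp add: residue_eq_iff)

end

lemma Rep_residue_field_nonlocal:
  "\<not> local_ring TYPE('a::comm_ring_1) \<Longrightarrow> Rep_residue_field (X::'a residue_field) \<in> {{}, UNIV}"
  using Rep_residue_field[of X] by (simp add: residue_classes_def)

instantiation residue_field :: (comm_ring_1) field
begin

definition zero_residue_field_def:
  "0 = Abs_residue_field (if local_ring TYPE('a) then residue_class 0 else {})"

definition one_residue_field_def:
  "1 = Abs_residue_field (if local_ring TYPE('a) then residue_class 1 else UNIV)"

definition plus_residue_field_def:
  "X + Y = Abs_residue_field (if local_ring TYPE('a)
     then residue_class (residue_repr X + residue_repr Y)
     else (Rep_residue_field X - Rep_residue_field Y)
       \<union> (Rep_residue_field Y - Rep_residue_field X))"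

definition times_residue_field_def:
  "X * Y = Abs_residue_field (if local_ring TYPE('a)
     then residue_class (residue_repr X * residue_repr Y)
     else Rep_residue_field X \<inter> Rep_residue_field Y)"

definition uminus_residue_field_def:
  "- X = (SOME Y. Y + X = (0::'a residue_field))"

definition minus_residue_field_def:
  "X - Y = X + - (Y::'a residue_field)"

definition inverse_residue_field_def:
  "inverse X = (if X = 0 then 0 else SOME Y. Y * X = (1::'a residue_field))"

definition divide_residue_field_def:
  "divide X Y = X * inverse (Y::'a residue_field)"

context
  assumes local: "local_ring TYPE('a::comm_ring_1)"
begin

lemma residue_0: "residue 0 = (0::'a residue_field)"
  using local by (simp add: zero_residue_field_def residue_def)

lemma residue_1: "residue 1 = (1::'a residue_field)"
  using local by (simp add: one_residue_field_def residue_def)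

lemma residue_add: "residue x + residue y = residue (x + y :: 'a)"
proof -
  have "residue_repr (residue x) + residue_repr (residue y) - (x + y)
      = (residue_repr (residue x) - x) + (residue_repr (residue y) - y)"
    by simp
  also have "\<dots> \<in> max_ideal"
    using local by (intro max_ideal_add residue_repr_residue)
  finally show ?thesis
    using local by (simp add: plus_residue_field_def residue_eq_iff[symmetric] residue_def)
qed

lemma residue_mult: "residue x * residue y = residue (x * y :: 'a)"
proof -
  define x' y' where "x' = residue_repr (residue x)" and "y' = residue_repr (residue y)"
  have "x' * y' - x * y = y' * (x' - x) + x * (y' - y)"
    by (simp add: algebra_simps)
  also have "\<dots> \<in> max_ideal"
    using local unfolding x'_def y'_def by (intro max_ideal_add max_ideal_mult residue_repr_residue)
  finally show ?thesis
    using local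
    by (simp add: times_residue_field_def residue_eq_iff[symmetric] residue_def x'_def y'_def)
qed

end

lemma Rep_residue_field_nonlocal_ops:
  assumes "\<not> local_ring TYPE('a)"
  shows "Rep_residue_field (0::'a residue_field) = {}"
    and "Rep_residue_field (1::'a residue_field) = UNIV"
    and "Rep_residue_field (X + Y) =
      (Rep_residue_field X - Rep_residue_field Y) \<union> (Rep_residue_field Y - Rep_residue_field X)"
    and "Rep_residue_field (X * Y) = Rep_residue_field X \<inter> Rep_residue_field Y"
  using assms Rep_residue_field_nonlocal[OF assms, of X] Rep_residue_field_nonlocal[OF assms, of Y]
  by (auto simp: zero_residue_field_def one_residue_field_def plus_residue_field_def
      times_residue_field_def Abs_residue_field_inverse residue_classes_def)

lemma residue_field_ring_laws:
  fixes a b c :: "'a residue_field"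
  shows "a + b + c = a + (b + c) \<and> a + b = b + a \<and> 0 + a = a
    \<and> a * b * c = a * (b * c) \<and> a * b = b * a \<and> 1 * a = a
    \<and> (a + b) * c = a * c + b * c \<and> 0 \<noteq> (1::'a residue_field)"
proof (cases "local_ring TYPE('a)")
  case True
  obtain x y z where "a = residue x" "b = residue y" "c = residue z"
    using residue_cases[OF True] by metis
  with True show ?thesis
    by (simp add: residue_add residue_mult algebra_simps residue_eq_iff max_ideal_def
        flip: residue_0 residue_1)
next
  case False
  then show ?thesis
    using Rep_residue_field_nonlocal[OF False, of a] Rep_residue_field_nonlocal[OF False, of b]
      Rep_residue_field_nonlocal[OF False, of c]
    by (simp add: Rep_residue_field_inject[symmetric] Rep_residue_field_nonlocal_ops) blast
qed

lemma residue_field_add_inverse_ex: "\<exists>Y. Y + X = (0::'a residue_field)"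
proof (cases "local_ring TYPE('a)")
  case True
  then obtain x where "X = residue x" by (rule residue_cases)
  with True have "residue (- x) + X = 0" by (simp add: residue_add residue_0)
  then show ?thesis ..
next
  case False
  then have "X + X = 0"
    by (simp add: Rep_residue_field_inject[symmetric] Rep_residue_field_nonlocal_ops)
  then show ?thesis ..
qed

lemma residue_field_mult_inverse_ex: "X \<noteq> 0 \<Longrightarrow> \<exists>Y. Y * X = (1::'a residue_field)"
proof (cases "local_ring TYPE('a)")
  case True
  assume "X \<noteq> 0"
  obtain x where x: "X = residue x" using True by (rule residue_cases)
  with \<open>X \<noteq> 0\<close> True have "x dvd 1"
    by (auto simp: residue_eq_iff max_ideal_def simp flip: residue_0)
  then obtain y where "1 = x * y" ..
  with True x have "residue y * X = 1" by (simp add: residue_mult residue_1 mult.commute)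
  then show ?thesis ..
next
  case False
  assume "X \<noteq> 0"
  with False have "Rep_residue_field X = UNIV"
    using Rep_residue_field_nonlocal[OF False, of X]
    by (auto simp: Rep_residue_field_inject[symmetric] Rep_residue_field_nonlocal_ops)
  with False have "X * X = 1"
    by (simp add: Rep_residue_field_inject[symmetric] Rep_residue_field_nonlocal_ops)
  then show ?thesis ..
qed

instance proof
  fix a b c :: "'a residue_field"
  show "a + b + c = a + (b + c)" "a + b = b + a" "0 + a = a" "a * b * c = a * (b * c)"
    "a * b = b * a" "1 * a = a" "(a + b) * c = a * c + b * c" "0 \<noteq> (1::'a residue_field)"
    using residue_field_ring_laws by blast+
  show "- a + a = 0"
    unfolding uminus_residue_field_def by (rule someI_ex) (rule residue_field_add_inverse_ex)
  show "a \<noteq> 0 \<Longrightarrow> inverse a * a = 1"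
    using someI_ex[OF residue_field_mult_inverse_ex] by (simp add: inverse_residue_field_def)
qed (simp_all add: minus_residue_field_def divide_residue_field_def inverse_residue_field_def)

end

context
  assumes local: "local_ring TYPE('a::comm_ring_1)"
begin

lemma residue_eq_0_iff: "residue (x::'a) = 0 \<longleftrightarrow> x \<in> max_ideal"
  using local by (simp add: residue_eq_iff flip: residue_0)

lemma residue_diff: "residue (x - y :: 'a) = residue x - residue y"
  using local residue_add[OF local, of "x - y" y] by (simp add: eq_diff_eq)

lemma residue_sum: "residue (\<Sum>i\<in>A. f i :: 'a) = (\<Sum>i\<in>A. residue (f i))"
  by (induct A rule: infinite_finite_induct) (simp_all add: local residue_0 flip: residue_add)

lemma coeff_map_poly_residue: "coeff (map_poly residue p) i = residue (coeff p i :: 'a)"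
  by (simp add: coeff_map_poly local residue_0)

lemma map_poly_residue_add:
  "map_poly residue (p + q :: 'a poly) = map_poly residue p + map_poly residue q"
  by (rule poly_eqI) (simp add: coeff_map_poly_residue local flip: residue_add)

lemma map_poly_residue_diff:
  "map_poly residue (p - q :: 'a poly) = map_poly residue p - map_poly residue q"
  by (rule poly_eqI) (simp add: coeff_map_poly_residue residue_diff)

lemma map_poly_residue_mult:
  "map_poly residue (p * q :: 'a poly) = map_poly residue p * map_poly residue q"
  by (rule poly_eqI)
    (simp add: coeff_map_poly_residue coeff_mult residue_sum local flip: residue_mult)

lemma map_poly_residue_monom_minus_const:
  "map_poly residue (monom 1 n - [:c::'a:]) = monom 1 n - [:residue c:]"
  by (simp add: map_poly_residue_diff map_poly_monom map_poly_pCons local residue_0 residue_1)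

lemma map_poly_residue_dvd: "p dvd (q::'a poly) \<Longrightarrow> map_poly residue p dvd map_poly residue q"
  by (auto simp: map_poly_residue_mult elim!: dvdE)

end

section \<open>Constacyclic codes over a field\<close>

definition coeff_inner :: "nat \<Rightarrow> 'a::comm_ring_1 poly \<Rightarrow> 'a poly \<Rightarrow> 'a" where
  "coeff_inner n p q = (\<Sum>j<n. coeff p j * coeff q j)"

definition reverse_poly :: "nat \<Rightarrow> 'a::comm_ring_1 poly \<Rightarrow> 'a poly" where
  "reverse_poly n p = monom 1 (n - 1 - degree p) * reflect_poly p"

lemma coeff_reverse_poly:
  "degree p < n \<Longrightarrow> coeff (reverse_poly n p) i = (if i < n then coeff p (n - 1 - i) else 0)"
  by (auto simp: reverse_poly_def coeff_monom_mult coeff_reflect_poly coeff_eq_0)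

lemma degree_reverse_poly: "degree p < n \<Longrightarrow> degree (reverse_poly n p) < n"
  by (rule degree_lessI) (auto simp: coeff_reverse_poly)

lemma coeff_inner_eq_coeff_reverse_poly_mult:
  assumes "degree p < n" "degree q < n"
  shows "coeff_inner n p q = coeff (reverse_poly n p * q) (n - 1)"
proof -
  have "coeff (reverse_poly n p * q) (n - 1)
      = (\<Sum>i\<le>n - 1. coeff p (n - 1 - i) * coeff q (n - 1 - i))"
    using assms(1) by (auto simp: coeff_mult coeff_reverse_poly intro: sum.cong)
  also have "\<dots> = (\<Sum>i<n. coeff p (n - Suc i) * coeff q (n - Suc i))"
    using assms by (intro sum.cong) auto
  also have "\<dots> = coeff_inner n p q"
    unfolding coeff_inner_def by (rule sum.nat_diff_reindex)
  finally show ?thesis ..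
qed

lemma coeff_monom_minus_const: "0 < n \<Longrightarrow> coeff (monom 1 n - [:c:]) n = (1::'a::comm_ring_1)"
  by (cases n) auto

lemma degree_monom_minus_const: "0 < n \<Longrightarrow> degree (monom 1 n - [:c::'a::comm_ring_1:]) = n"
  by (rule antisym[OF degree_le le_degree])
    (auto simp: coeff_monom_minus_const coeff_pCons split: nat.split)

lemma reflect_monom_minus_const:
  assumes "0 < n"
  shows "reflect_poly (monom 1 n - [:c:]) + smult c (monom 1 n - [:c:])
    = [:1 - c * c::'a::comm_ring_1:]"
proof (rule poly_eqI)
  fix i
  show "coeff (reflect_poly (monom 1 n - [:c:]) + smult c (monom 1 n - [:c:])) i
    = coeff [:1 - c * c:] i"
    using assms by (auto simp: coeff_reflect_poly degree_monom_minus_const coeff_monom coeff_pCons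
        split: nat.splits)
qed

lemma coeff_mod_monom_minus_const:
  fixes B :: "'k::field poly"
  assumes n: "0 < n" and B: "degree B < 2 * n - 1"
  shows "coeff (B mod (monom 1 n - [:c:])) (n - 1) = coeff B (n - 1)"
proof -
  define P where "P = monom 1 n - [:c:]"
  define Q where "Q = B div P"
  have dP: "degree P = n" using n by (simp add: P_def degree_monom_minus_const)
  then have "P \<noteq> 0" using n by auto
  have "degree (B mod P) < n"
    using degree_mod_less[OF \<open>P \<noteq> 0\<close>, of B] dP n by auto
  then have "degree (Q * P) < 2 * n - 1"
    using B degree_diff_le_max[of B "B mod P"] by (simp add: Q_def minus_mod_eq_div_mult[symmetric])
  then have "coeff Q (n - 1) = 0"
  proof (cases "Q = 0")
    case False
    then have "degree Q + n < 2 * n - 1"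
      using \<open>degree (Q * P) < 2 * n - 1\<close> dP degree_mult_eq[OF False \<open>P \<noteq> 0\<close>] by simp
    then show ?thesis by (simp add: coeff_eq_0)
  qed simp
  moreover have "Q * P = monom 1 n * Q - smult c Q"
    by (simp add: P_def right_diff_distrib mult.commute)
  ultimately have "coeff (Q * P) (n - 1) = 0"
    using n by (simp add: coeff_monom_mult)
  then show ?thesis
    by (simp add: P_def[symmetric] Q_def minus_div_mult_eq_mod[symmetric])
qed

lemma coeff_shift_mod_eq_0_imp_dvd:
  fixes P Y :: "'k::field poly"
  assumes dP: "degree P = n" and n: "0 < n"
    and shifts: "\<forall>k<n. coeff ((monom 1 k * Y) mod P) (n - 1) = 0"
  shows "P dvd Y"
proof (rule ccontr)
  assume "\<not> P dvd Y"
  define A where "A = Y mod P"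
  have "P \<noteq> 0" using dP n by auto
  with \<open>\<not> P dvd Y\<close> have "A \<noteq> 0" "degree A < n"
    using degree_mod_less_degree dP by (auto simp: A_def mod_eq_0_iff_dvd)
  define k where "k = n - 1 - degree A"
  have "degree (monom 1 k * A) = n - 1"
    using \<open>A \<noteq> 0\<close> \<open>degree A < n\<close> by (simp add: degree_mult_eq degree_monom_eq k_def)
  then have "(monom 1 k * Y) mod P = monom 1 k * A"
    using dP n by (simp add: A_def mod_mult_right_eq[of _ Y, symmetric] mod_poly_less)
  moreover have "coeff (monom 1 k * A) (n - 1) = lead_coeff A"
    using \<open>degree A < n\<close> by (simp add: coeff_monom_mult k_def)
  moreover have "k < n"
    using n by (simp add: k_def)
  ultimately show False
    using shifts \<open>A \<noteq> 0\<close> by auto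
qed

text \<open>With P = f h, the unit reflect_poly P + c P = 1 - c * c lies in the ideal generated by
  h and reflect_poly f, so these two are coprime.\<close>

lemma cofactor_mult_reflect_poly_dvd:
  fixes f h X :: "'k::field poly"
  assumes n: "0 < n" and c: "c * c \<noteq> 1" and fh: "f * h = monom 1 n - [:c:]"
    and "h dvd X" "reflect_poly f dvd X"
  shows "h * reflect_poly f dvd X"
proof -
  obtain u where u: "X = h * u"
    using \<open>h dvd X\<close> ..
  obtain v where v: "X = reflect_poly f * v"
    using \<open>reflect_poly f dvd X\<close> ..
  have hu: "reflect_poly f * reflect_poly h * X = h * reflect_poly f * (reflect_poly h * u)"
    by (simp add: u ac_simps)
  have fv: "f * h * X = h * reflect_poly f * (f * v)"
    by (simp add: v ac_simps)
  have "smult (1 - c * c) X = (reflect_poly (f * h) + smult c (f * h)) * X"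
    using reflect_monom_minus_const[OF n, of c] by (simp add: fh)
  also have "\<dots> = reflect_poly f * reflect_poly h * X + smult c (f * h * X)"
    by (simp add: reflect_poly_mult distrib_right)
  also have "\<dots> = h * reflect_poly f * (reflect_poly h * u + smult c (f * v))"
    unfolding hu fv by (simp only: distrib_left mult_smult_right)
  finally have "h * reflect_poly f dvd smult (1 - c * c) X" ..
  with c show ?thesis by (simp add: dvd_smult_iff)
qed

lemma monom_minus_const_dvd_reverse_poly_mult:
  fixes c :: "'k::field" and f W :: "'k poly"
  assumes n: "0 < n" and dW: "degree W < n"
    and orth: "\<And>k. k < n \<Longrightarrow> coeff_inner n W ((monom 1 k * f) mod (monom 1 n - [:c:])) = 0"
  shows "monom 1 n - [:c:] dvd reverse_poly n W * f"
proof (rule coeff_shift_mod_eq_0_imp_dvd[OF degree_monom_minus_const[OF n] n], intro allI impI)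
  fix k assume "k < n"
  define P where "P = monom 1 n - [:c:]"
  define q where "q = (monom 1 k * f) mod P"
  have "P \<noteq> 0"
    using n degree_monom_minus_const[OF n, of c] by (auto simp: P_def)
  then have dq: "degree q < n"
    using degree_mod_less[OF \<open>P \<noteq> 0\<close>, of "monom 1 k * f"] n
    by (auto simp: q_def P_def degree_monom_minus_const)
  have "degree (reverse_poly n W * q) < 2 * n - 1"
    using degree_mult_le[of "reverse_poly n W" q] degree_reverse_poly[OF dW] dq by linarith
  then have "coeff ((monom 1 k * (reverse_poly n W * f)) mod P) (n - 1)
      = coeff (reverse_poly n W * q) (n - 1)"
    using coeff_mod_monom_minus_const[OF n, of "reverse_poly n W * q" c]
    by (simp add: P_def q_def mod_mult_right_eq mult.left_commute)
  also have "\<dots> = 0"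
    using orth[OF \<open>k < n\<close>] coeff_inner_eq_coeff_reverse_poly_mult[OF dW dq]
    by (simp add: q_def P_def)
  finally show "coeff ((monom 1 k * (reverse_poly n W * f)) mod (monom 1 n - [:c:])) (n - 1) = 0"
    by (simp add: P_def)
qed

lemma orthogonal_to_constacyclic_code_eq_0:
  fixes c :: "'k::field" and f h W :: "'k poly"
  assumes n: "0 < n" and "c \<noteq> 0" and "c * c \<noteq> 1"
    and fh: "f * h = monom 1 n - [:c:]"
    and dW: "degree W < n" and "f dvd W"
    and orth: "\<And>k. k < n \<Longrightarrow> coeff_inner n W ((monom 1 k * f) mod (monom 1 n - [:c:])) = 0"
  shows "W = 0"
proof -
  define X where "X = reverse_poly n W"
  have "f \<noteq> 0" "h \<noteq> 0"
    using fh degree_monom_minus_const[OF n, of c] n by auto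
  have "f * h dvd f * X"
    using monom_minus_const_dvd_reverse_poly_mult[OF n dW orth] by (simp add: fh X_def mult.commute)
  then have "h dvd X"
    using \<open>f \<noteq> 0\<close> by simp
  moreover have "reflect_poly f dvd X"
    using \<open>f dvd W\<close> by (auto simp: X_def reverse_poly_def reflect_poly_mult elim!: dvdE)
  ultimately have dvd: "h * reflect_poly f dvd X"
    by (rule cofactor_mult_reflect_poly_dvd[OF n \<open>c * c \<noteq> 1\<close> fh])
  have "coeff f 0 * coeff h 0 = - c"
    using fh n by (simp flip: coeff_mult_0)
  then have "coeff f 0 \<noteq> 0"
    using \<open>c \<noteq> 0\<close> by auto
  moreover have "degree f + degree h = n"
    using fh \<open>f \<noteq> 0\<close> \<open>h \<noteq> 0\<close> degree_monom_minus_const[OF n, of c]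
    by (metis degree_mult_eq)
  ultimately have "degree (h * reflect_poly f) = n"
    using \<open>f \<noteq> 0\<close> \<open>h \<noteq> 0\<close> by (simp add: degree_mult_eq)
  moreover have "degree X < n"
    using dW by (simp add: X_def degree_reverse_poly)
  ultimately have "X = 0"
    using dvd_imp_degree_le[OF dvd] by fastforce
  then show ?thesis
    by (simp add: X_def reverse_poly_def)
qed

section \<open>Finite chain rings and free codes\<close>

lemma is_ideal_range_mult: "is_ideal (range ((*) (a::'a::comm_ring_1)))"
  unfolding is_ideal_def
  by (auto simp: image_iff intro: exI[of _ 0] simp flip: distrib_left) (metis mult.left_commute)

lemma finite_chain_ring_ideal_principal:
  assumes fcr: "finite_chain_ring TYPE('a::comm_ring_1)" and I: "is_ideal (I::'a set)"
  shows "\<exists>a\<in>I. I = range ((*) a)"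
proof -
  let ?B = "(\<lambda>a. range ((*) a)) ` I"
  have "finite ?B"
    using fcr unfolding finite_chain_ring_def by (blast intro: finite_imageI finite_subset)
  moreover have "?B \<noteq> {}"
    using I by (auto simp: is_ideal_def)
  moreover have "subset.chain UNIV ?B"
    using fcr is_ideal_range_mult unfolding subset_chain_def finite_chain_ring_def by blast
  ultimately have "\<Union>?B \<in> ?B"
    by (rule Union_in_chain)
  moreover have "\<Union>?B = I"
  proof
    show "\<Union>?B \<subseteq> I"
      using I by (auto simp: is_ideal_def) (metis mult.commute)
    show "I \<subseteq> \<Union>?B"
      by (force intro: range_eqI[of _ _ 1])
  qed
  ultimately show ?thesis
    by auto
qed

lemma finite_local_ring_nilpotent:
  assumes fin: "finite (UNIV::'a set)" and local: "local_ring TYPE('a::comm_ring_1)"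
    and g: "g \<in> max_ideal"
  shows "\<exists>k. g ^ k = (0::'a)"
proof -
  have "\<not> inj (\<lambda>k::nat. g ^ k)"
    using fin finite_imageD[of "\<lambda>k::nat. g ^ k" UNIV] finite_subset[OF subset_UNIV] by auto
  then obtain i j where "i < j" "g ^ i = g ^ j"
    unfolding inj_def by (metis linorder_neqE_nat)
  define t where "t = j - i"
  have "g ^ t \<in> max_ideal"
    using \<open>i < j\<close> max_ideal_mult[OF local g, of "g ^ (t - 1)"]
    by (simp add: t_def power_Suc2[symmetric] Suc_diff_Suc)
  then have "1 - g ^ t \<notin> max_ideal"
    using max_ideal_add[OF local, of "1 - g ^ t" "g ^ t"] by (auto simp: max_ideal_def)
  then obtain u where u: "1 = (1 - g ^ t) * u"
    by (auto simp: max_ideal_def elim!: dvdE)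
  have "g ^ j = g ^ i * g ^ t"
    using \<open>i < j\<close> by (simp add: t_def flip: power_add)
  then have "g ^ i * (1 - g ^ t) = 0"
    using \<open>g ^ i = g ^ j\<close> by (simp add: right_diff_distrib)
  then have "g ^ i = 0"
    by (metis u mult.assoc mult_1_right mult_zero_left)
  then show ?thesis ..
qed

lemma finite_chain_ring_max_ideal_generator:
  assumes fcr: "finite_chain_ring TYPE('a)"
  obtains \<gamma> :: "'a::comm_ring_1" and k :: nat
  where "max_ideal = range ((*) \<gamma>)" and "\<gamma> ^ k = 0"
proof -
  have local: "local_ring TYPE('a)"
    using fcr by (rule finite_chain_ring_imp_local_ring)
  then have "is_ideal (max_ideal::'a set)"
    by (simp add: local_ring_def)
  from finite_chain_ring_ideal_principal[OF fcr this]
  obtain \<gamma> :: 'a where "\<gamma> \<in> max_ideal" and "max_ideal = range ((*) \<gamma>)"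
    by blast
  moreover have "finite (UNIV::'a set)"
    using fcr by (simp add: finite_chain_ring_def)
  ultimately show ?thesis
    using finite_local_ring_nilpotent[OF _ local] that by blast
qed

lemma length_lincomb: "length (lincomb n a B) = n"
  by (simp add: lincomb_def)

lemma lincomb_scale: "map ((*) s) (lincomb n a B) = lincomb n (\<lambda>i. s * a i) B"
  by (simp add: lincomb_def sum_distrib_left mult.assoc)

lemma lincomb_cong: "(\<And>i. i < length B \<Longrightarrow> a i = b i) \<Longrightarrow> lincomb n a B = lincomb n b B"
  by (auto simp: lincomb_def intro!: sum.cong)

lemma lincomb_in_code:
  assumes C: "is_linear_code n C" and B: "set B \<subseteq> C"
  shows "lincomb n a B \<in> C"
proof -
  have "map (\<lambda>j. \<Sum>i<m. a i * B ! i ! j) [0..<n] \<in> C" if "m \<le> length B" for m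
    using that
  proof (induction m)
    case 0
    then show ?case
      using C by (simp add: is_linear_code_def map_replicate_const)
  next
    case (Suc m)
    have "B ! m \<in> C"
      using Suc.prems B by (simp add: subset_iff)
    then have "length (B ! m) = n" and scaled: "map ((*) (a m)) (B ! m) \<in> C"
      using C by (simp_all add: is_linear_code_def)
    have "map2 (+) (map (\<lambda>j. \<Sum>i<m. a i * B ! i ! j) [0..<n]) (map ((*) (a m)) (B ! m)) \<in> C"
      using C Suc scaled by (simp add: is_linear_code_def)
    also have "map2 (+) (map (\<lambda>j. \<Sum>i<m. a i * B ! i ! j) [0..<n]) (map ((*) (a m)) (B ! m))
        = map (\<lambda>j. \<Sum>i<Suc m. a i * B ! i ! j) [0..<n]"
      by (rule nth_equalityI) (simp_all add: \<open>length (B ! m) = n\<close>)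
    finally show ?case .
  qed
  then show ?thesis
    by (simp add: lincomb_def)
qed

lemma inner_scale_left: "length u = n \<Longrightarrow> inner n (map ((*) s) u) v = s * inner n u v"
  by (simp add: inner_def sum_distrib_left mult.assoc)

lemma dual_code_scale: "u \<in> dual_code n C \<Longrightarrow> map ((*) s) u \<in> dual_code n C"
  by (simp add: dual_code_def inner_scale_left)

lemma map_mult_map_mult: "map ((*) a) (map ((*) b) c) = map ((*) (a * b :: 'a::comm_ring_1)) c"
  by (simp add: mult.assoc)

lemma exists_multiple_annihilated:
  fixes g :: "'a::comm_ring_1"
  assumes "map ((*) (g ^ k)) c = replicate (length c) 0" "c \<noteq> replicate (length c) 0"
  shows "\<exists>r. map ((*) r) c \<noteq> replicate (length c) 0
    \<and> map ((*) (g * r)) c = replicate (length c) 0"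
  using assms
proof (induction k arbitrary: c)
  case 0
  then show ?case
    by (simp add: map_idI)
next
  case (Suc k)
  show ?case
  proof (cases "map ((*) g) c = replicate (length c) 0")
    case True
    then show ?thesis
      using Suc.prems by (intro exI[of _ 1]) (simp add: map_idI)
  next
    case False
    moreover have "map ((*) (g ^ k)) (map ((*) g) c) = replicate (length c) 0"
      unfolding map_mult_map_mult power_Suc2[symmetric] by (rule Suc.prems(1))
    ultimately obtain r where "map ((*) r) (map ((*) g) c) \<noteq> replicate (length c) 0"
      and "map ((*) (g * r)) (map ((*) g) c) = replicate (length c) 0"
      using Suc.IH[of "map ((*) g) c"] by auto
    then show ?thesis
      unfolding map_mult_map_mult by (metis mult.assoc)
  qed
qed

lemma finite_chain_ring_annihilator_principal:
  fixes g :: "'a::comm_ring_1"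
  assumes "finite_chain_ring TYPE('a)"
  shows "\<exists>s. g * s = 0 \<and> (\<forall>x. g * x = 0 \<longrightarrow> (\<exists>t. x = s * t))"
proof -
  have "is_ideal {x. g * x = 0}"
    by (auto simp: is_ideal_def distrib_left mult.left_commute)
  from finite_chain_ring_ideal_principal[OF assms this] show ?thesis
    by (metis (mono_tags, lifting) mem_Collect_eq rangeE)
qed

lemma scale_eq_0_if_in_max_ideal:
  assumes "max_ideal = range ((*) \<gamma>)" and "\<gamma> * s = 0"
    and "\<forall>j<length w. w ! j \<in> max_ideal"
  shows "map ((*) s) w = replicate (length w) 0"
proof (rule nth_equalityI)
  fix j assume "j < length (map ((*) s) w)"
  then obtain t where "w ! j = \<gamma> * t"
    using assms(1,3) by auto
  with \<open>j < length (map ((*) s) w)\<close> \<open>\<gamma> * s = 0\<close>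
  show "map ((*) s) w ! j = replicate (length w) 0 ! j"
    by (simp add: mult.left_commute[of s]) (metis mult.assoc mult_zero_left)
qed simp

lemma free_code_annihilated_codeword:
  fixes C :: "'a::comm_ring_1 list set"
  assumes fcr: "finite_chain_ring TYPE('a)"
    and C: "is_linear_code n C" and free: "free_code n C"
    and \<gamma>: "max_ideal = range ((*) \<gamma>)"
    and c: "c \<in> C" "map ((*) \<gamma>) c = replicate n 0" "c \<noteq> replicate n 0"
  shows "\<exists>s. \<exists>w\<in>C. c = map ((*) s) w \<and> (\<exists>j<n. w ! j \<notin> max_ideal)"
proof -
  obtain B where B: "set B \<subseteq> C"
    and indep: "\<And>a. lincomb n a B = replicate n 0 \<Longrightarrow> \<forall>i<length B. a i = 0"
    and span: "\<forall>c\<in>C. \<exists>a. c = lincomb n a B"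
    using free by (auto simp: free_code_def)
  obtain a where a: "c = lincomb n a B"
    using span c(1) by blast
  have "lincomb n (\<lambda>i. \<gamma> * a i) B = replicate n 0"
    using c(2) by (simp add: a lincomb_scale)
  then have \<gamma>a: "\<gamma> * a i = 0" if "i < length B" for i
    using indep that by blast
  obtain s where s: "\<gamma> * s = 0" and ann: "\<And>x. \<gamma> * x = 0 \<Longrightarrow> \<exists>t. x = s * t"
    using finite_chain_ring_annihilator_principal[OF fcr, of \<gamma>] by blast
  obtain b where b: "\<And>i. i < length B \<Longrightarrow> a i = s * b i"
    using ann[OF \<gamma>a] by metis
  define w where "w = lincomb n b B"
  have "w \<in> C"
    unfolding w_def using C B by (rule lincomb_in_code)
  have cw: "c = map ((*) s) w"
    unfolding a w_def lincomb_scale by (rule lincomb_cong) (simp add: b)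
  have "\<exists>j<n. w ! j \<notin> max_ideal"
    using scale_eq_0_if_in_max_ideal[OF \<gamma> s, of w] c(3)
    by (auto simp: cw w_def length_lincomb)
  with \<open>w \<in> C\<close> cw show ?thesis
    by blast
qed

lemma scaled_dual_codeword_inner_in_max_ideal:
  assumes "map ((*) s) w \<in> dual_code n C" and "map ((*) s) w \<noteq> replicate n 0"
    and "length w = n" and "v \<in> C"
  shows "inner n w v \<in> max_ideal"
proof (rule ccontr)
  assume "inner n w v \<notin> max_ideal"
  then obtain z where z: "1 = inner n w v * z"
    by (auto simp: max_ideal_def elim!: dvdE)
  have "s * inner n w v = inner n (map ((*) s) w) v"
    by (simp add: inner_scale_left[OF \<open>length w = n\<close>])
  also have "\<dots> = 0"
    using assms(1,4) by (simp add: dual_code_def)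
  finally have "s = 0"
    by (metis z mult.assoc mult_1_right mult_zero_left)
  then have "map ((*) s) w = replicate n 0"
    using assms(3) by (intro nth_equalityI) simp_all
  with assms(2) show False ..
qed

lemma exists_codeword_orthogonal_mod_max_ideal:
  fixes C :: "'a::comm_ring_1 list set"
  assumes fcr: "finite_chain_ring TYPE('a)"
    and C: "is_linear_code n C" and free: "free_code n C"
    and c: "c \<in> C" "c \<in> dual_code n C" "c \<noteq> replicate n 0"
  shows "\<exists>w\<in>C. (\<exists>j<n. w ! j \<notin> max_ideal) \<and> (\<forall>v\<in>C. inner n w v \<in> max_ideal)"
proof -
  have lc: "length c = n"
    using C c(1) by (simp add: is_linear_code_def)
  obtain \<gamma> :: 'a and k where \<gamma>: "max_ideal = range ((*) \<gamma>)" and "\<gamma> ^ k = 0"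
    using finite_chain_ring_max_ideal_generator[OF fcr] .
  then have "map ((*) (\<gamma> ^ k)) c = replicate (length c) 0"
    by (intro nth_equalityI) simp_all
  from exists_multiple_annihilated[OF this] c(3) lc
  obtain r where r: "map ((*) r) c \<noteq> replicate n 0" "map ((*) (\<gamma> * r)) c = replicate n 0"
    by auto
  define c' where "c' = map ((*) r) c"
  have "c' \<in> C"
    using C c(1) unfolding c'_def is_linear_code_def by blast
  moreover have "map ((*) \<gamma>) c' = replicate n 0"
    using r(2) unfolding c'_def map_mult_map_mult .
  moreover have "c' \<noteq> replicate n 0"
    using r(1) by (simp add: c'_def)
  ultimately obtain s w where "w \<in> C" and cw: "c' = map ((*) s) w"
    and unit: "\<exists>j<n. w ! j \<notin> max_ideal"
    using free_code_annihilated_codeword[OF fcr C free \<gamma>] by blast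
  moreover have "length w = n"
    using C \<open>w \<in> C\<close> by (simp add: is_linear_code_def)
  moreover have "c' \<in> dual_code n C"
    using c(2) unfolding c'_def by (rule dual_code_scale)
  ultimately show ?thesis
    using \<open>w \<in> C\<close> unit \<open>c' \<noteq> replicate n 0\<close>
    by (auto simp: cw intro: scaled_dual_codeword_inner_in_max_ideal)
qed

section \<open>Reduction modulo the maximal ideal\<close>

lemma Psi_generated_by_divisor:
  assumes "Psi_generated_by lam n C F" and "F dvd monom 1 n - [:lam:]"
  shows "C = {c. length c = n \<and> F dvd Poly c}"
proof -
  have "(\<exists>g h. Poly c = g * F + h * (monom 1 n - [:lam:])) \<longleftrightarrow> F dvd Poly c" for c
  proof
    assume "\<exists>g h. Poly c = g * F + h * (monom 1 n - [:lam:])"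
    then show "F dvd Poly c"
      using assms(2) by (auto intro!: dvd_add dvd_mult)
  next
    assume "F dvd Poly c"
    then obtain g where "Poly c = F * g" ..
    then show "\<exists>g h. Poly c = g * F + h * (monom 1 n - [:lam:])"
      by (intro exI[of _ g] exI[of _ 0]) (simp add: mult.commute)
  qed
  with assms(1) show ?thesis
    by (simp add: Psi_generated_by_def Psi_def)
qed

lemma inner_eq_coeff_inner:
  "length u = n \<Longrightarrow> length v = n \<Longrightarrow> inner n u v = coeff_inner n (Poly u) (Poly v)"
  by (simp add: inner_def coeff_inner_def nth_default_def)

lemma residue_coeff_inner:
  "local_ring TYPE('a::comm_ring_1) \<Longrightarrow>
    residue (coeff_inner n p q :: 'a) = coeff_inner n (map_poly residue p) (map_poly residue q)"
  by (simp add: coeff_inner_def residue_sum coeff_map_poly_residue residue_mult)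

lemma monic_division:
  fixes f g :: "'a::comm_ring_1 poly"
  assumes "lead_coeff g = 1" and "0 < degree g"
  obtains q r where "f = g * q + r" and "degree r < degree g"
proof -
  obtain q r where qr: "pseudo_divmod f g = (q, r)"
    by force
  have "g \<noteq> 0"
    using assms(1) by auto
  from pseudo_divmod[OF this qr] assms show ?thesis
    by (intro that[of q r]) auto
qed

lemma residue_of_shifted_generator:
  fixes F H :: "'a::comm_ring_1 poly"
  assumes local: "local_ring TYPE('a)" and n: "0 < n" and FH: "F * H = monom 1 n - [:lam:]"
  obtains v where "length v = n" and "F dvd Poly v"
    and "map_poly residue (Poly v)
      = (monom 1 k * map_poly residue F) mod (monom 1 n - [:residue lam:])"
proof -
  let ?P = "monom 1 n - [:lam:]"
  obtain q r where qr: "monom 1 k * F = ?P * q + r" and "degree r < n"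
    using monic_division[of ?P] coeff_monom_minus_const[OF n] degree_monom_minus_const[OF n] n
    by metis
  define v where "v = map (coeff r) [0..<n]"
  have "Poly v = r"
    using \<open>degree r < n\<close> by (intro poly_eqI) (auto simp: v_def nth_default_def coeff_eq_0)
  have "r = F * (monom 1 k - H * q)"
    using qr by (simp add: algebra_simps flip: FH)
  then have "F dvd Poly v"
    by (simp add: \<open>Poly v = r\<close>)
  have "monom 1 k * map_poly residue F
      = (monom 1 n - [:residue lam:]) * map_poly residue q + map_poly residue r"
    using arg_cong[OF qr, of "map_poly residue"] local
    by (simp add: map_poly_residue_mult map_poly_residue_add map_poly_residue_monom_minus_const
        map_poly_monom residue_0 residue_1)
  moreover have "degree (map_poly residue r) < degree (monom 1 n - [:residue lam:])"
    using \<open>degree r < n\<close> map_poly_degree_leq[of residue r] n by (simp add: degree_monom_minus_const)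
  ultimately have "(monom 1 k * map_poly residue F) mod (monom 1 n - [:residue lam:])
      = map_poly residue r"
    by (simp add: mod_poly_less)
  with \<open>F dvd Poly v\<close> \<open>Poly v = r\<close> show ?thesis
    by (intro that[of v]) (simp_all add: v_def)
qed

lemma residue_unit_ne_inverse:
  assumes local: "local_ring TYPE('a::comm_ring_1)"
    and "lam dvd 1" and "residue_ne_inverse (lam::'a)"
  shows "residue lam \<noteq> 0" and "residue lam * residue lam \<noteq> 1"
proof -
  obtain \<mu> where \<mu>: "1 = lam * \<mu>"
    using \<open>lam dvd 1\<close> ..
  show "residue lam \<noteq> 0"
    using \<open>lam dvd 1\<close> local by (simp add: residue_eq_0_iff max_ideal_def)
  have "residue lam * residue \<mu> = 1"
    using local \<mu> by (simp add: residue_mult residue_1)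
  show "residue lam * residue lam \<noteq> 1"
  proof
    assume "residue lam * residue lam = 1"
    then have "residue lam = residue \<mu>"
      using \<open>residue lam * residue \<mu> = 1\<close> by (metis mult.assoc mult.commute mult_1_right)
    then have "lam - \<mu> \<in> max_ideal"
      using local by (simp add: residue_eq_iff)
    moreover have "lam - \<mu> \<notin> max_ideal"
      using \<open>residue_ne_inverse lam\<close> \<mu> by (simp add: residue_ne_inverse_def)
    ultimately show False
      by contradiction
  qed
qed

lemma codeword_orthogonal_mod_max_ideal_coeff_in_max_ideal:
  fixes F H :: "'a::comm_ring_1 poly"
  assumes local: "local_ring TYPE('a)" and "lam dvd 1" and "residue_ne_inverse lam"
    and n: "0 < n" and FH: "F * H = monom 1 n - [:lam:]"
    and w: "length w = n" "F dvd Poly w"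
    and orth: "\<And>v. length v = n \<Longrightarrow> F dvd Poly v \<Longrightarrow> inner n w v \<in> max_ideal"
    and "j < n"
  shows "w ! j \<in> max_ideal"
proof -
  define l where "l = residue lam"
  define W where "W = map_poly residue (Poly w)"
  have "l \<noteq> 0" "l * l \<noteq> 1"
    using residue_unit_ne_inverse[OF local \<open>lam dvd 1\<close> \<open>residue_ne_inverse lam\<close>]
    by (simp_all add: l_def)
  have "map_poly residue F * map_poly residue H = monom 1 n - [:l:]"
    using local
    by (simp add: l_def FH map_poly_residue_monom_minus_const flip: map_poly_residue_mult)
  moreover have "degree W < n"
  proof (rule degree_lessI)
    show "\<forall>i\<ge>n. coeff W i = 0"
      using w(1) local by (simp add: W_def coeff_map_poly_residue nth_default_def residue_0)
  qed (use n in simp)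
  moreover have "map_poly residue F dvd W"
    using local w(2) unfolding W_def by (rule map_poly_residue_dvd)
  moreover have "coeff_inner n W ((monom 1 k * map_poly residue F) mod (monom 1 n - [:l:])) = 0"
    if "k < n" for k
  proof -
    obtain v where "length v = n" "F dvd Poly v"
      and v: "map_poly residue (Poly v) = (monom 1 k * map_poly residue F) mod (monom 1 n - [:l:])"
      using residue_of_shifted_generator[OF local n FH] unfolding l_def by metis
    then have "residue (inner n w v) = 0"
      using orth local by (simp add: residue_eq_0_iff)
    then show ?thesis
      using local w(1) \<open>length v = n\<close>
      by (simp add: W_def inner_eq_coeff_inner residue_coeff_inner flip: v)
  qed
  ultimately have "W = 0"
    by (rule orthogonal_to_constacyclic_code_eq_0[OF n \<open>l \<noteq> 0\<close> \<open>l * l \<noteq> 1\<close>])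
  moreover have "coeff W j = residue (w ! j)"
    using \<open>j < n\<close> w(1) local by (simp add: W_def coeff_map_poly_residue nth_default_def)
  ultimately show ?thesis
    using local by (simp add: residue_eq_0_iff)
qed

theorem corollary4p8:
  fixes lam :: "'a::comm_ring_1" and n :: nat and C :: "'a list set" and F :: "'a poly"
  assumes "finite_chain_ring TYPE('a)"
    and "lam dvd 1"
    and "residue_ne_inverse lam"
    and "constacyclic lam n C"
    and "free_code n C"
    and "Psi_generated_by lam n C F"
    and "F dvd (monom 1 n - [:lam:])"
  shows "is_LCD n C"
proof -
  have local: "local_ring TYPE('a)"
    using assms(1) by (rule finite_chain_ring_imp_local_ring)
  have linear: "is_linear_code n C"
    using assms(4) by (simp add: constacyclic_def)
  have C: "C = {c. length c = n \<and> F dvd Poly c}"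
    using assms(6,7) by (rule Psi_generated_by_divisor)
  obtain H where FH: "F * H = monom 1 n - [:lam:]"
    using assms(7) by (metis dvdE)
  have "c = replicate n 0" if c: "c \<in> C" "c \<in> dual_code n C" for c
  proof (rule ccontr)
    assume "c \<noteq> replicate n 0"
    with c(1) C have "0 < n"
      by (cases n) auto
    obtain w j where "w \<in> C" "j < n" "w ! j \<notin> max_ideal" "\<forall>v\<in>C. inner n w v \<in> max_ideal"
      using exists_codeword_orthogonal_mod_max_ideal[OF assms(1) linear assms(5) c
          \<open>c \<noteq> replicate n 0\<close>] by blast
    with codeword_orthogonal_mod_max_ideal_coeff_in_max_ideal[OF local assms(2,3) \<open>0 < n\<close> FH]
    show False
      using C by blast
  qed
  moreover have "replicate n 0 \<in> C \<inter> dual_code n C"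
    using C by (simp add: dual_code_def inner_def)
  ultimately show ?thesis
    by (auto simp: is_LCD_def)
qed

end
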